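(* Let $\bar c$ be a null vertex of $\operatorname{conv}(\mathcal C)$ such that $c=2\bar c-d$ is not a type I vector. Let $u\in\mathcal W$ satisfy $J(\bar u,\bar c)=0$. Then: (a) there exists an index $i$ with $c_i\ne0$ and $-2<c_i<1$; (b) if $c\in\mathbb Z^r$, then there is at most one $u\in\mathcal W$ with $J(\bar u,\bar c)=0$, and hence at most one vertex of type (1A) in $\Delta^{\bar c}$.
   Context: Setting: $G$ compact Lie group, $K\subset G$ closed, $G/K$ connected almost effective, isotropy representation $\mathfrak p=\mathfrak p_1\oplus\cdots\oplus\mathfrak p_r$ ($r\ge2$) with pairwise inequivalent $\mathbb R$-irreducible summands, $d_i=\dim\mathfrak p_i$, $d=(d_1,\dots,d_r)$, $n=\sum d_i$. The scalar curvature of the metric $e^{q_i}Q$ on $\mathfrak p_i$ is $S(q)=\sum_{w\in\mathcal W}A_we^{w\cdot q}$, $\mathcal W\subset\mathbb Z^r$ finite, $A_w\ne0$, each $w$ of type I (one entry $-1$), type II (one entry $1$, two entries $-1$) or type III (one entry $1$, one entry $-2$), other entries $0$; $A_w>0$ for type I and $<0$ otherwise. Assume $\dim\operatorname{conv}(\mathcal W)=r-1$. $J$ is the symmetric bilinear form with $J(p,p)=\frac1{n-1}(\sum p_i)^2-\sum p_i^2/d_i$; null means $J(\bar x,\bar x)=0$. $u=\sum_{\bar c\in\mathcal C}F_{\bar c}e^{\bar c\cdot q}$ ($\mathcal C$ finite, $F_{\bar c}\ne0$) is a superpotential: for every $\xi$, $\sum_{(\bar a,\bar c)\in\mathcal C^2,\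 \bar a+\bar c=\xi}J(\bar a,\bar c)F_{\bar a}F_{\bar c}$ equals $A_w$ if $\xi=d+w$, $w\in\mathcal W$, and $0$ otherwise; $\mathcal C$ lies in $\mathcal H=\{\sum\bar x_i=\frac12(n-1)\}$. For $x$ with $\sum x_i=-1$ write $\bar x=\frac12(d+x)$. For the null vertex $\bar c$ (which lies outside $\operatorname{conv}(\frac12(d+\mathcal W))$), $\Delta^{\bar c}$ is the image of $\operatorname{conv}(\frac12(d+\mathcal W))$ under $\bar z\mapsto$ (intersection of the ray from $\bar c$ through $\bar z$ with a fixed affine hyperplane $H'\subset\mathcal H$ strictly separating $\bar c$ from $\operatorname{conv}(\frac12(d+\mathcal W))$); a vertex $\bar\xi$ of $\Delta^{\bar c}$ is of type (1A) if $J(\bar c,\bar\xi)=0$. *)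

theory Defs
  imports "HOL-Analysis.Analysis"
begin

text \<open>Vectors in R^r are modelled as real^'r for a finite index type 'r (r = CARD('r)).\<close>

definition vsum :: "real^'r \<Rightarrow> real" where
  "vsum p = (\<Sum>i\<in>UNIV. p $ i)"

definition int_vec :: "real^'r \<Rightarrow> bool" where
  "int_vec x \<longleftrightarrow> (\<forall>i. x $ i \<in> \<int>)"

definition typeI :: "real^'r \<Rightarrow> bool" where
  "typeI w \<longleftrightarrow> (\<exists>i. w $ i = -1 \<and> (\<forall>k. k \<noteq> i \<longrightarrow> w $ k = 0))"

definition typeII :: "real^'r \<Rightarrow> bool" where
  "typeII w \<longleftrightarrow> (\<exists>i j k. i \<noteq> j \<and> i \<noteq> k \<and> j \<noteq> k \<and>
      w $ i = 1 \<and> w $ j = -1 \<and> w $ k = -1 \<and>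
      (\<forall>l. l \<noteq> i \<and> l \<noteq> j \<and> l \<noteq> k \<longrightarrow> w $ l = 0))"

definition typeIII :: "real^'r \<Rightarrow> bool" where
  "typeIII w \<longleftrightarrow> (\<exists>i j. i \<noteq> j \<and> w $ i = 1 \<and> w $ j = -2 \<and>
      (\<forall>l. l \<noteq> i \<and> l \<noteq> j \<longrightarrow> w $ l = 0))"

definition ndim :: "real^'r \<Rightarrow> real" where
  "ndim d = vsum d"

definition Jform :: "real^'r \<Rightarrow> real^'r \<Rightarrow> real^'r \<Rightarrow> real" where
  "Jform d p q = vsum p * vsum q / (ndim d - 1) - (\<Sum>i\<in>UNIV. p $ i * q $ i / d $ i)"

definition bar :: "real^'r \<Rightarrow> real^'r \<Rightarrow> real^'r" where
  "bar d x = (1/2) *\<^sub>R (d + x)"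

definition Hplane :: "real^'r \<Rightarrow> (real^'r) set" where
  "Hplane d = {x. vsum x = (ndim d - 1) / 2}"

text \<open>Standing assumptions on (d, W, A) coming from the scalar curvature
  S(q) = sum_w A_w e^{w.q}.\<close>
definition scal_data :: "real^'r \<Rightarrow> (real^'r) set \<Rightarrow> (real^'r \<Rightarrow> real) \<Rightarrow> bool" where
  "scal_data d W A \<longleftrightarrow>
     CARD('r) \<ge> 2 \<and>
     (\<forall>i. d $ i \<in> \<nat> \<and> d $ i \<ge> 1) \<and>
     finite W \<and>
     (\<forall>w\<in>W. int_vec w \<and> A w \<noteq> 0 \<and> (typeI w \<or> typeII w \<or> typeIII w)) \<and>
     (\<forall>w\<in>W. typeI w \<longrightarrow> A w > 0) \<and>
     (\<forall>w\<in>W. \<not> typeI w \<longrightarrow> A w < 0) \<and>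
     aff_dim (convex hull W) = int CARD('r) - 1"

text \<open>u = sum_{c in C} F_c e^{c.q} is a superpotential (with C in H).\<close>
definition superpotential ::
  "real^'r \<Rightarrow> (real^'r) set \<Rightarrow> (real^'r \<Rightarrow> real) \<Rightarrow> (real^'r) set \<Rightarrow> (real^'r \<Rightarrow> real) \<Rightarrow> bool" where
  "superpotential d W A C F \<longleftrightarrow>
     finite C \<and> (\<forall>c\<in>C. F c \<noteq> 0) \<and> C \<subseteq> Hplane d \<and>
     (\<forall>\<xi>. (\<Sum>p\<in>{p\<in>C \<times> C. fst p + snd p = \<xi>}. Jform d (fst p) (snd p) * F (fst p) * F (snd p))
            = (if \<exists>w\<in>W. \<xi> = d + w then A (\<xi> - d) else 0))"

text \<open>Admissible H' = {x in H. a.x = beta}: a genuine affine hyperplane of H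
  (a not parallel to (1,...,1)) strictly separating cbar from conv(bar(d + W)).\<close>
definition sep_hyperplane ::
  "real^'r \<Rightarrow> (real^'r) set \<Rightarrow> real^'r \<Rightarrow> real^'r \<Rightarrow> real \<Rightarrow> bool" where
  "sep_hyperplane d W cb a \<beta> \<longleftrightarrow>
     (\<forall>t::real. a \<noteq> t *\<^sub>R (\<chi> i. 1)) \<and>
     a \<bullet> cb < \<beta> \<and> (\<forall>z\<in>convex hull (bar d ` W). \<beta> < a \<bullet> z)"

definition cproj :: "real^'r \<Rightarrow> real^'r \<Rightarrow> real \<Rightarrow> real^'r \<Rightarrow> real^'r" where
  "cproj cb a \<beta> z = cb + ((\<beta> - a \<bullet> cb) / (a \<bullet> z - a \<bullet> cb)) *\<^sub>R (z - cb)"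

definition Delta :: "real^'r \<Rightarrow> (real^'r) set \<Rightarrow> real^'r \<Rightarrow> real^'r \<Rightarrow> real \<Rightarrow> (real^'r) set" where
  "Delta d W cb a \<beta> = cproj cb a \<beta> ` (convex hull (bar d ` W))"

end

theory Submission
  imports Defs
begin

text \<open>Write \<open>c = 2 cb - d\<close>. Nullity of \<open>cb\<close> and \<open>J(ub, cb) = 0\<close> say that
  \<open>\<Sum> c\<^sub>i\<^sup>2/d\<^sub>i = \<Sum> u\<^sub>i c\<^sub>i/d\<^sub>i = 1\<close>, i.e. \<open>\<Sum> c\<^sub>i (c\<^sub>i - u\<^sub>i)/d\<^sub>i = 0\<close>. As the entries of \<open>u\<close> lie in
  \<open>{0, 1, -1, -2}\<close>, a summand can only be negative if \<open>c\<^sub>i\<close> lies strictly between \<open>-2\<close> and \<open>1\<close>;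
  otherwise every \<open>c\<^sub>i\<close> is \<open>0\<close> or \<open>u\<^sub>i\<close>, forcing \<open>c = u\<close> or \<open>c\<close> of type I. But \<open>c \<notin> W\<close>: as
  \<open>cb\<close> is a vertex, the coefficient of \<open>e^(2 cb\<cdot>q)\<close> in the superpotential equation is
  \<open>J(cb, cb) F(cb)\<^sup>2 = 0\<close>.

  For integral \<open>c\<close> the only possible negative summand is \<open>c\<^sub>j = -1\<close> against \<open>u\<^sub>j = -2\<close>, so every
  such \<open>u\<close> is of type III with its \<open>-2\<close> where \<open>c\<close> has a \<open>-1\<close>. Two of them either average to \<open>c\<close>,
  contradicting that \<open>cb\<close> is a vertex, or share that index \<open>j\<close>, and then \<open>d\<^sub>j \<le> 3\<close>. In that case
  a point \<open>a\<close> of \<open>C\<close> with an extremal entry satisfies \<open>J(a, a) < 0\<close>, so its unique decomposition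
  puts \<open>2a - d\<close> into \<open>W\<close>. This confines the \<open>j\<close>-th entries of \<open>2C - d\<close> to \<open>[-2, \<infinity>)\<close>, and a
  suitable pair of points with entry \<open>-2\<close> then yields an element of \<open>W\<close> with a fractional entry.
  Finally \<open>J(cb, \<cdot>)\<close> is affine along rays from the null point \<open>cb\<close>, so the vertices of type (1A)
  of \<open>\<Delta>\<close> are the projections of the \<open>wb\<close> with \<open>J(wb, cb) = 0\<close>.\<close>

lemma sum_UNIV_supported:
  fixes f :: "'a::finite \<Rightarrow> 'b::comm_monoid_add"
  assumes "\<And>l. l \<notin> S \<Longrightarrow> f l = 0"
  shows "sum f UNIV = sum f S"
  using assms by (intro sum.mono_neutral_right) auto

lemma sum_UNIV_split2:
  fixes f :: "'a::finite \<Rightarrow> 'b::comm_monoid_add"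
  assumes "a \<noteq> b"
  shows "sum f UNIV = f a + f b + sum f (UNIV - {a, b})"
  using assms sum.subset_diff[of "{a, b}" UNIV f] by (simp add: add.commute)

lemma card_le_1_if_all_equal: "(\<And>x y. x \<in> S \<Longrightarrow> y \<in> S \<Longrightarrow> x = y) \<Longrightarrow> card S \<le> 1"
proof (cases "S = {}")
  case False
  then obtain x where "x \<in> S" by blast
  moreover assume "\<And>x y. x \<in> S \<Longrightarrow> y \<in> S \<Longrightarrow> x = y"
  ultimately have "S = {x}" by blast
  then show ?thesis by simp
qed simp

section \<open>Admissible vectors\<close>

lemma vsum_add: "vsum (x + y) = vsum x + vsum y"
  by (simp add: vsum_def sum.distrib)

lemma vsum_scaleR: "vsum (a *\<^sub>R x) = a * vsum x"
  by (simp add: vsum_def sum_distrib_left)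

lemma vsum_diff: "vsum (x - y) = vsum x - vsum y"
  by (simp add: vsum_def sum_subtractf)

definition typeIII_at :: "'r \<Rightarrow> 'r \<Rightarrow> real^'r \<Rightarrow> bool" where
  "typeIII_at i j w \<longleftrightarrow> i \<noteq> j \<and> w $ i = 1 \<and> w $ j = -2 \<and> (\<forall>l. l \<noteq> i \<and> l \<noteq> j \<longrightarrow> w $ l = 0)"

lemma typeIII_iff_typeIII_at: "typeIII w \<longleftrightarrow> (\<exists>i j. typeIII_at i j w)"
  unfolding typeIII_def typeIII_at_def by blast

lemma typeIII_at_nth:
  "typeIII_at i j w \<Longrightarrow> w $ l = (if l = i then 1 else if l = j then -2 else 0)"
  unfolding typeIII_at_def by auto

lemma typeIII_at_eq:
  assumes "typeIII_at i j v" "typeIII_at i j w" shows "v = w"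
  using assms unfolding typeIII_at_def vec_eq_iff by metis

abbreviation admissible :: "real^'r \<Rightarrow> bool" where
  "admissible w \<equiv> typeI w \<or> typeII w \<or> typeIII w"

lemma vsum_admissible: "admissible w \<Longrightarrow> vsum w = -1"
  unfolding typeI_def typeII_def typeIII_def vsum_def
proof (elim disjE exE conjE)
  fix i assume "\<forall>k. k \<noteq> i \<longrightarrow> w $ k = 0" "w $ i = -1"
  then show "(\<Sum>i\<in>UNIV. w $ i) = -1" by (subst sum_UNIV_supported[of "{i}"]) auto
next
  fix i j k assume "i \<noteq> j" "i \<noteq> k" "j \<noteq> k" "w $ i = 1" "w $ j = -1" "w $ k = -1"
    "\<forall>l. l \<noteq> i \<and> l \<noteq> j \<and> l \<noteq> k \<longrightarrow> w $ l = 0"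
  then show "(\<Sum>i\<in>UNIV. w $ i) = -1" by (subst sum_UNIV_supported[of "{i, j, k}"]) auto
next
  fix i j assume "i \<noteq> j" "w $ i = 1" "w $ j = -2" "\<forall>l. l \<noteq> i \<and> l \<noteq> j \<longrightarrow> w $ l = 0"
  then show "(\<Sum>i\<in>UNIV. w $ i) = -1" by (subst sum_UNIV_supported[of "{i, j}"]) auto
qed

lemma admissible_entries: "admissible w \<Longrightarrow> w $ l \<in> {0, 1, -1, -2}"
  unfolding typeI_def typeII_def typeIII_def by (elim disjE exE conjE; metis insert_iff)

lemma typeI_typeII_entries: "typeI w \<or> typeII w \<Longrightarrow> w $ l \<in> {0, 1, -1}"
  unfolding typeI_def typeII_def by (elim disjE exE conjE; metis insert_iff)

lemma admissible_neg2_typeIII_at: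
  assumes "admissible w" "w $ j = -2"
  obtains i where "typeIII_at i j w"
proof -
  have "\<not> (typeI w \<or> typeII w)"
    using typeI_typeII_entries[of w j] assms(2) by auto
  then obtain i j' where "typeIII_at i j' w"
    using assms(1) typeIII_iff_typeIII_at by blast
  moreover from this have "j' = j"
    using assms(2) unfolding typeIII_at_def by (metis one_neq_neg_numeral zero_neq_neg_numeral)
  ultimately show thesis using that by blast
qed

lemma admissible_entry_off_neg2:
  assumes "admissible w" "w $ j = -2" "l \<noteq> j"
  shows "w $ l = 0 \<or> w $ l = 1"
  using admissible_neg2_typeIII_at[OF assms(1,2)] assms(3) unfolding typeIII_at_def by metis

section \<open>The form J and vanishing pairings\<close>

lemma Jform_sym: "Jform d p q = Jform d q p"
  unfolding Jform_def by (simp add: mult.commute)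

lemma Jform_affine_right:
  "Jform d p (x + t *\<^sub>R (y - x)) = Jform d p x + t * (Jform d p y - Jform d p x)"
proof -
  have v: "vsum (x + t *\<^sub>R (y - x)) = vsum x + t * (vsum y - vsum x)"
    by (simp add: vsum_add vsum_scaleR vsum_diff)
  have s: "(\<Sum>i\<in>UNIV. p $ i * (x + t *\<^sub>R (y - x)) $ i / d $ i)
     = (\<Sum>i\<in>UNIV. p $ i * x $ i / d $ i)
       + t * ((\<Sum>i\<in>UNIV. p $ i * y $ i / d $ i) - (\<Sum>i\<in>UNIV. p $ i * x $ i / d $ i))"
    by (simp add: sum.distrib sum_subtractf sum_distrib_left algebra_simps add_divide_distrib
        diff_divide_distrib)
  show ?thesis unfolding Jform_def v s by (simp add: algebra_simps add_divide_distrib diff_divide_distrib)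
qed

lemma Jform_bar:
  assumes dpos: "\<And>i. d $ i > 0" and n: "ndim d \<noteq> 1"
    and x: "vsum x = -1" and y: "vsum y = -1"
  shows "Jform d (bar d x) (bar d y) = (1 - (\<Sum>i\<in>UNIV. x $ i * y $ i / d $ i)) / 4"
proof -
  have bx: "vsum (bar d x) = (ndim d - 1) / 2" and sy: "vsum (bar d y) = (ndim d - 1) / 2"
    using x y by (simp_all add: bar_def vsum_scaleR vsum_add ndim_def)
  have e: "(bar d x) $ i * (bar d y) $ i / d $ i
        = (d $ i + x $ i + y $ i + x $ i * y $ i / d $ i) / 4" for i
    using dpos[of i] by (simp add: bar_def field_simps)
  have s: "(\<Sum>i\<in>UNIV. (bar d x) $ i * (bar d y) $ i / d $ i)
     = (ndim d - 2 + (\<Sum>i\<in>UNIV. x $ i * y $ i / d $ i)) / 4"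
    unfolding e using x y by (simp add: sum_divide_distrib[symmetric] sum.distrib ndim_def vsum_def)
  show ?thesis unfolding Jform_def bx sy s using n by (simp add: field_simps power2_eq_square)
qed

lemma sum_pairing_diff:
  fixes c w d :: "real^'r"
  shows "(\<Sum>l\<in>UNIV. c $ l * (c $ l - w $ l) / d $ l)
     = (\<Sum>l\<in>UNIV. c $ l * c $ l / d $ l) - (\<Sum>l\<in>UNIV. w $ l * c $ l / d $ l)"
  by (simp add: right_diff_distrib diff_divide_distrib sum_subtractf mult.commute)

lemma entries_of_zero_pairing:
  fixes c w d :: "real^'r"
  assumes dpos: "\<And>l. d $ l > 0"
    and zero: "(\<Sum>l\<in>UNIV. c $ l * (c $ l - w $ l) / d $ l) = 0"
    and nonneg: "\<And>l. c $ l * (c $ l - w $ l) \<ge> 0"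
  shows "c $ l = 0 \<or> c $ l = w $ l"
proof -
  have "c $ l * (c $ l - w $ l) / d $ l = 0"
    by (rule sum_nonneg_0[OF _ _ zero]) (use nonneg dpos in \<open>auto intro: divide_nonneg_pos\<close>)
  then have "c $ l * (c $ l - w $ l) = 0" using dpos[of l] by auto
  then show ?thesis by simp
qed

lemma admissible_subpattern:
  assumes w: "admissible w" and c: "\<And>l. c $ l = 0 \<or> c $ l = w $ l" and sc: "vsum c = -1"
  shows "c = w \<or> typeI c"
  using w
proof (elim disjE)
  assume "typeI w"
  then obtain i where w: "w $ i = -1" "\<forall>k. k \<noteq> i \<longrightarrow> w $ k = 0" unfolding typeI_def by blast
  have supp: "c $ l = 0" if "l \<noteq> i" for l using c[of l] w that by auto
  then have "vsum c = c $ i" unfolding vsum_def by (subst sum_UNIV_supported[of "{i}"]) auto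
  then have "c $ i = w $ i" using sc w by simp
  then show ?thesis using supp w by (metis vec_eq_iff)
next
  assume "typeII w"
  then obtain i j k where w: "i \<noteq> j" "i \<noteq> k" "j \<noteq> k" "w $ i = 1" "w $ j = -1" "w $ k = -1"
    "\<forall>l. l \<noteq> i \<and> l \<noteq> j \<and> l \<noteq> k \<longrightarrow> w $ l = 0" unfolding typeII_def by blast
  have supp: "c $ l = 0" if "l \<noteq> i" "l \<noteq> j" "l \<noteq> k" for l using c[of l] w that by auto
  then have "vsum c = c $ i + c $ j + c $ k"
    unfolding vsum_def using w(1-3) by (subst sum_UNIV_supported[of "{i, j, k}"]) auto
  then have sum3: "c $ i + c $ j + c $ k = -1" using sc by simp
  have "c $ i = 0 \<or> c $ i = 1" "c $ j = 0 \<or> c $ j = -1" "c $ k = 0 \<or> c $ k = -1"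
    using c[of i] c[of j] c[of k] w(4-6) by auto
  then consider "c $ i = 1" "c $ j = -1" "c $ k = -1"
    | "c $ i = 0" "c $ j = -1" "c $ k = 0" | "c $ i = 0" "c $ j = 0" "c $ k = -1"
    using sum3 by (elim disjE) auto
  then show ?thesis
  proof cases
    case 1
    then have "c $ l = w $ l" for l
      using supp[of l] w by (cases "l = i"; cases "l = j"; cases "l = k") auto
    then show ?thesis by (simp add: vec_eq_iff)
  next
    case 2
    then have "typeI c" unfolding typeI_def using supp w(1-3) by (intro exI[of _ j]) metis
    then show ?thesis ..
  next
    case 3
    then have "typeI c" unfolding typeI_def using supp w(1-3) by (intro exI[of _ k]) metis
    then show ?thesis ..
  qed
next
  assume "typeIII w"
  then obtain i j where w: "typeIII_at i j w" using typeIII_iff_typeIII_at by blast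
  then have supp: "c $ l = 0" if "l \<noteq> i" "l \<noteq> j" for l
    using c[of l] that unfolding typeIII_at_def by auto
  then have "vsum c = c $ i + c $ j"
    unfolding vsum_def using w by (subst sum_UNIV_supported[of "{i, j}"]) (auto simp: typeIII_at_def)
  moreover have "c $ i = 0 \<or> c $ i = 1" "c $ j = 0 \<or> c $ j = -2"
    using c[of i] c[of j] w unfolding typeIII_at_def by auto
  ultimately have "c $ i = 1" "c $ j = -2" using sc by auto
  then have "typeIII_at i j c" using supp w unfolding typeIII_at_def by blast
  then show ?thesis using typeIII_at_eq w by blast
qed

lemma exists_entry_between_neg2_and_1:
  fixes c w d :: "real^'r"
  assumes dpos: "\<And>l. d $ l > 0" and sc: "vsum c = -1"
    and zero: "(\<Sum>l\<in>UNIV. c $ l * (c $ l - w $ l) / d $ l) = 0"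
    and w: "admissible w" and cw: "c \<noteq> w"
  shows "\<exists>i. c $ i \<noteq> 0 \<and> -2 < c $ i \<and> c $ i < 1"
proof (rule ccontr)
  assume "\<not> ?thesis"
  then have far: "c $ l = 0 \<or> c $ l \<le> -2 \<or> 1 \<le> c $ l" for l by force
  have "c $ l * (c $ l - w $ l) \<ge> 0" for l
    using far[of l] admissible_entries[OF w, of l] by (auto simp: mult_nonneg_nonneg mult_nonpos_nonpos)
  then have "c = w \<or> typeI c"
    using admissible_subpattern[OF w _ sc] entries_of_zero_pairing[OF dpos zero] by blast
  moreover have "\<not> typeI c"
  proof
    assume "typeI c"
    then obtain i where "c $ i = -1" unfolding typeI_def by blast
    then show False using far[of i] by simp
  qed
  ultimately show False using cw by blast
qed

lemma integer_product_nonneg: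
  fixes t s :: real
  assumes "t \<in> \<int>" "s \<in> {0, 1, -1, -2}" "\<not> (s = -2 \<and> t = -1)"
  shows "t * (t - s) \<ge> 0"
proof -
  obtain k where k: "t = of_int k" using assms(1) Ints_cases by blast
  have "k \<le> -2 \<or> k = -1 \<or> k = 0 \<or> k \<ge> 1" by linarith
  then have "t \<le> -2 \<or> t = -1 \<or> t = 0 \<or> t \<ge> 1" using k by auto
  then show ?thesis using assms(2,3) by (auto simp: mult_nonneg_nonneg mult_nonpos_nonpos)
qed

lemma integral_zero_pairing_neg2:
  fixes c w d :: "real^'r"
  assumes dpos: "\<And>l. d $ l > 0" and ci: "int_vec c" and sc: "vsum c = -1"
    and zero: "(\<Sum>l\<in>UNIV. c $ l * (c $ l - w $ l) / d $ l) = 0"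
    and w: "admissible w" and cw: "c \<noteq> w" and "\<not> typeI c"
  obtains j where "w $ j = -2" "c $ j = -1"
proof (rule ccontr)
  assume "\<not> thesis"
  then have "\<not> (w $ l = -2 \<and> c $ l = -1)" for l using that by blast
  then have "c $ l * (c $ l - w $ l) \<ge> 0" for l
    using integer_product_nonneg admissible_entries[OF w] ci unfolding int_vec_def by blast
  then have "c = w \<or> typeI c"
    using admissible_subpattern[OF w _ sc] entries_of_zero_pairing[OF dpos zero] by blast
  then show False using assms(6,7) by blast
qed

lemma typeIII_pairings_same_neg2:
  fixes c w w' d :: "real^'r"
  assumes dpos: "\<And>l. d $ l > 0" and dj: "d $ j \<in> \<nat>" and ci: "int_vec c"
    and cc: "(\<Sum>l\<in>UNIV. c $ l * c $ l / d $ l) = 1"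
    and wc: "(\<Sum>l\<in>UNIV. w $ l * c $ l / d $ l) = 1"
    and wc': "(\<Sum>l\<in>UNIV. w' $ l * c $ l / d $ l) = 1"
    and w: "typeIII_at i j w" and w': "typeIII_at i' j w'" and ii': "i \<noteq> i'"
    and cj: "c $ j = -1"
  shows "d $ j \<le> 3"
proof (rule ccontr)
  assume "\<not> d $ j \<le> 3"
  moreover obtain m where "d $ j = of_nat m" using dj Nats_cases by blast
  ultimately have d4: "4 \<le> d $ j" by simp
  have big: "1/2 \<le> c $ k * c $ k / d $ k" if v: "typeIII_at k j v"
    and vc: "(\<Sum>l\<in>UNIV. v $ l * c $ l / d $ l) = 1" for k v
  proof -
    have "k \<noteq> j" using v unfolding typeIII_at_def by simp
    then have "(\<Sum>l\<in>UNIV. v $ l * c $ l / d $ l) = c $ k / d $ k + 2 / d $ j"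
      by (subst sum_UNIV_supported[of "{k, j}"]) (auto simp: typeIII_at_nth[OF v] cj)
    moreover have "2 / d $ j \<le> 1/2" using d4 by (simp add: field_simps)
    ultimately have q: "1/2 \<le> c $ k / d $ k" using vc by linarith
    then have "0 < c $ k" using dpos[of k] by (simp add: zero_less_divide_iff)
    moreover obtain z where "c $ k = of_int z" using ci Ints_cases unfolding int_vec_def by blast
    ultimately have "1 \<le> c $ k" by simp
    then have "c $ k / d $ k \<le> c $ k * c $ k / d $ k"
      using mult_right_mono[of 1 "c $ k" "c $ k / d $ k"] q by simp
    then show ?thesis using q by linarith
  qed
  have "i \<noteq> j" "i' \<noteq> j" using w w' unfolding typeIII_at_def by auto
  then have "c $ j * c $ j / d $ j \<le> (\<Sum>l\<in>UNIV - {i, i'}. c $ l * c $ l / d $ l)"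
    by (intro member_le_sum) (auto intro: divide_nonneg_pos dpos)
  moreover have "0 < c $ j * c $ j / d $ j" using cj dpos[of j] by simp
  ultimately have "1 < c $ i * c $ i / d $ i + c $ i' * c $ i' / d $ i'
      + (\<Sum>l\<in>UNIV - {i, i'}. c $ l * c $ l / d $ l)"
    using big[OF w wc] big[OF w' wc'] by linarith
  then show False using cc sum_UNIV_split2[OF ii', of "\<lambda>l. c $ l * c $ l / d $ l"] by linarith
qed

lemma typeIII_pairing_second_neg1:
  fixes c w d :: "real^'r"
  assumes dpos: "\<And>l. d $ l > 0" and ci: "int_vec c"
    and cc: "(\<Sum>l\<in>UNIV. c $ l * c $ l / d $ l) = 1"
    and wc: "(\<Sum>l\<in>UNIV. w $ l * c $ l / d $ l) = 1"
    and w: "typeIII_at i j w" and jk: "j \<noteq> k" and cj: "c $ j = -1" and ck: "c $ k = -1"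
  shows "1 / d $ k \<le> 1 / d $ j"
    and "1 / d $ k = 1 / d $ j \<Longrightarrow> w $ k = 0 \<and> (\<forall>l. l \<noteq> j \<and> l \<noteq> k \<longrightarrow> c $ l = 0 \<or> c $ l = w $ l)"
proof -
  have cI: "c $ l \<in> \<int>" for l using ci unfolding int_vec_def by blast
  have went: "w $ l \<in> {0, 1, -1, -2}" for l
    using w unfolding typeIII_at_def by (metis insert_iff)
  define f where "f l = c $ l * (c $ l - w $ l) / d $ l" for l
  define R where "R = sum f (UNIV - {j, k})"
  have "sum f UNIV = 0" using cc wc sum_pairing_diff[of c w d] unfolding f_def by simp
  then have split: "f j + f k + R = 0" using sum_UNIV_split2[OF jk, of f] unfolding R_def by simp
  have fnn: "0 \<le> f l" if "l \<noteq> j" for l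
  proof -
    have "w $ l \<noteq> -2" using w that unfolding typeIII_at_def by (cases "l = i") auto
    then show ?thesis using integer_product_nonneg[OF cI went] dpos[of l] unfolding f_def by simp
  qed
  then have "0 \<le> R" unfolding R_def by (auto intro: sum_nonneg)
  have fj: "f j = -1 / d $ j" using w cj unfolding f_def typeIII_at_def by simp
  have wk: "w $ k \<in> {0, 1}" using typeIII_at_nth[OF w, of k] jk by auto
  then have fk: "f k = (1 + w $ k) / d $ k" using ck unfolding f_def by auto
  have "1 / d $ k \<le> f k" unfolding fk using wk dpos[of k] by (auto intro: divide_right_mono)
  then show "1 / d $ k \<le> 1 / d $ j" using split fj \<open>0 \<le> R\<close> by linarith
  assume "1 / d $ k = 1 / d $ j"
  then have "f k = 1 / d $ k" "R = 0" using split fj \<open>0 \<le> R\<close> \<open>1 / d $ k \<le> f k\<close> by linarith+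
  then have "w $ k = 0" using fk dpos[of k] by (auto simp: field_simps)
  moreover have "c $ l = 0 \<or> c $ l = w $ l" if "l \<noteq> j" "l \<noteq> k" for l
  proof -
    have "f l = 0" by (rule sum_nonneg_0[OF _ _ \<open>R = 0\<close>[unfolded R_def]]) (use fnn that in auto)
    then show ?thesis using dpos[of l] unfolding f_def by auto
  qed
  ultimately show "w $ k = 0 \<and> (\<forall>l. l \<noteq> j \<and> l \<noteq> k \<longrightarrow> c $ l = 0 \<or> c $ l = w $ l)" by blast
qed

lemma typeIII_pairings_distinct_neg2:
  fixes c w w' d :: "real^'r"
  assumes dpos: "\<And>l. d $ l > 0" and ci: "int_vec c" and sc: "vsum c = -1"
    and cc: "(\<Sum>l\<in>UNIV. c $ l * c $ l / d $ l) = 1"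
    and wc: "(\<Sum>l\<in>UNIV. w $ l * c $ l / d $ l) = 1"
    and wc': "(\<Sum>l\<in>UNIV. w' $ l * c $ l / d $ l) = 1"
    and w: "typeIII_at i j w" and w': "typeIII_at i' j' w'" and jj': "j \<noteq> j'"
    and cj: "c $ j = -1" and cj': "c $ j' = -1"
  shows "2 *\<^sub>R c = w + w'"
proof -
  note second = typeIII_pairing_second_neg1[OF dpos ci cc wc w jj' cj cj']
    typeIII_pairing_second_neg1[OF dpos ci cc wc' w' jj'[symmetric] cj' cj]
  then have eq: "1 / d $ j' = 1 / d $ j" by linarith
  then have "w $ j' = 0" using second(2) by blast
  have cf: "c $ l = 0 \<or> c $ l = w $ l" if "l \<noteq> j" "l \<noteq> j'" for l
    using second(2) eq that by blast
  have cg: "c $ l = 0 \<or> c $ l = w' $ l" if "l \<noteq> j" "l \<noteq> j'" for l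
    using second(4) eq that by fastforce
  have ij: "i \<noteq> j" "i \<noteq> j'" using w \<open>w $ j' = 0\<close> unfolding typeIII_at_def by auto
  have c0: "c $ l = 0" if "l \<noteq> i" "l \<noteq> j" "l \<noteq> j'" for l
    using cf[OF that(2,3)] typeIII_at_nth[OF w, of l] that by auto
  have "vsum c = c $ i + c $ j + c $ j'"
    unfolding vsum_def using ij jj' by (subst sum_UNIV_supported[of "{i, j, j'}"]) (auto intro: c0)
  then have ci1: "c $ i = 1" using sc cj cj' by simp
  then have "w' $ i = 1" using cg[OF ij] by simp
  then have "i' = i" using typeIII_at_nth[OF w', of i] ij by (auto split: if_splits)
  then have "(2 *\<^sub>R c) $ l = (w + w') $ l" for l
    using typeIII_at_nth[OF w, of l] typeIII_at_nth[OF w', of l] c0[of l] ci1 cj cj' ij jj'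
    by (cases "l = i"; cases "l = j"; cases "l = j'") auto
  then show ?thesis by (simp add: vec_eq_iff)
qed

section \<open>Consequences of the superpotential equation\<close>

locale superpotential_setting =
  fixes d :: "real^'r" and W :: "(real^'r) set" and A :: "real^'r \<Rightarrow> real"
    and C :: "(real^'r) set" and F :: "real^'r \<Rightarrow> real"
  assumes data: "scal_data d W A" and sp: "superpotential d W A C F"
begin

definition unbar :: "real^'r \<Rightarrow> real^'r" where
  "unbar p = 2 *\<^sub>R p - d"

definition coeff :: "real^'r \<Rightarrow> real" where
  "coeff \<xi> = (\<Sum>p\<in>{p\<in>C \<times> C. fst p + snd p = \<xi>}. Jform d (fst p) (snd p) * F (fst p) * F (snd p))"

lemma coeff_eq: "coeff \<xi> = (if \<exists>w\<in>W. \<xi> = d + w then A (\<xi> - d) else 0)"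
  using sp unfolding superpotential_def coeff_def by blast

lemma d_ge_1: "1 \<le> d $ l"
  using data unfolding scal_data_def by blast

lemma d_pos: "0 < d $ l"
  using d_ge_1[of l] by linarith

lemma d_nat: "d $ l \<in> \<nat>"
  using data unfolding scal_data_def by blast

lemma finite_W: "finite W"
  using data unfolding scal_data_def by blast

lemma admissible_W: "w \<in> W \<Longrightarrow> admissible w"
  using data unfolding scal_data_def by blast

lemma A_nonzero: "w \<in> W \<Longrightarrow> A w \<noteq> 0"
  using data unfolding scal_data_def by blast

lemma finite_C: "finite C"
  using sp unfolding superpotential_def by blast

lemma F_nonzero: "p \<in> C \<Longrightarrow> F p \<noteq> 0"
  using sp unfolding superpotential_def by blast

lemma ndim_ne_1: "ndim d \<noteq> 1"
proof -
  have "real CARD('r) = (\<Sum>i\<in>(UNIV::'r set). 1)" by simp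
  also have "\<dots> \<le> ndim d" unfolding ndim_def vsum_def by (intro sum_mono) (rule d_ge_1)
  finally show ?thesis using data unfolding scal_data_def by linarith
qed

lemma vsum_unbar: "p \<in> C \<Longrightarrow> vsum (unbar p) = -1"
  using sp unfolding superpotential_def Hplane_def
  by (auto simp: unbar_def vsum_diff vsum_scaleR ndim_def)

lemma bar_unbar [simp]: "bar d (unbar p) = p"
  by (simp add: unbar_def bar_def)

lemma unbar_bar [simp]: "unbar (bar d x) = x"
  by (simp add: unbar_def bar_def scaleR_add_right)

lemma unbar_inj: "unbar p = unbar q \<Longrightarrow> p = q"
  by (metis bar_unbar)

lemma unbar_add: "unbar p + unbar q = 2 *\<^sub>R (p + q - d)"
  by (simp add: unbar_def algebra_simps scaleR_2)

lemma unbar_midpoint: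
  assumes "p + q = 2 *\<^sub>R a" shows "unbar p + unbar q = 2 *\<^sub>R unbar a"
proof -
  have "unbar p + unbar q = 2 *\<^sub>R (p + q - d)" by (rule unbar_add)
  also have "\<dots> = 2 *\<^sub>R unbar a" unfolding assms unbar_def ..
  finally show ?thesis .
qed

lemma Jform_C:
  "p \<in> C \<Longrightarrow> q \<in> C \<Longrightarrow> Jform d p q = (1 - (\<Sum>l\<in>UNIV. unbar p $ l * unbar q $ l / d $ l)) / 4"
  using Jform_bar[OF d_pos ndim_ne_1 vsum_unbar vsum_unbar, of p q] by simp

lemma Jform_diag_le: "p \<in> C \<Longrightarrow> Jform d p p \<le> (1 - (unbar p $ j)\<^sup>2 / d $ j) / 4"
proof -
  assume p: "p \<in> C"
  have "unbar p $ j * unbar p $ j / d $ j \<le> (\<Sum>l\<in>UNIV. unbar p $ l * unbar p $ l / d $ l)"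
    by (intro member_le_sum) (auto intro: divide_nonneg_pos d_pos)
  then show ?thesis using Jform_C[OF p p] by (simp add: power2_eq_square)
qed

lemma W_decomposes:
  assumes "w \<in> W" obtains p q where "p \<in> C" "q \<in> C" "p + q = d + w"
proof -
  have "coeff (d + w) \<noteq> 0" using assms A_nonzero coeff_eq by auto
  then have "{p\<in>C \<times> C. fst p + snd p = d + w} \<noteq> {}" unfolding coeff_def by force
  then show thesis using that by auto
qed

lemma bar_W_in_hull: "w \<in> W \<Longrightarrow> bar d w \<in> convex hull C"
proof -
  assume "w \<in> W"
  then obtain p q where pq: "p \<in> C" "q \<in> C" "p + q = d + w" by (rule W_decomposes)
  have "(1/2) *\<^sub>R p + (1/2) *\<^sub>R q \<in> convex hull C"
    by (rule convexD[OF convex_convex_hull]) (use pq in \<open>auto intro: hull_inc\<close>)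
  moreover have "(1/2) *\<^sub>R p + (1/2) *\<^sub>R q = bar d w"
    unfolding bar_def pq(3)[symmetric] by (simp add: scaleR_add_right)
  ultimately show ?thesis by simp
qed

definition indecomposable :: "real^'r \<Rightarrow> bool" where
  "indecomposable a \<longleftrightarrow> (\<forall>p\<in>C. \<forall>q\<in>C. p + q = 2 *\<^sub>R a \<longrightarrow> p = a \<and> q = a)"

text \<open>For an indecomposable point the only contribution to the coefficient of \<open>e^{2a\<cdot>q}\<close> in the
  square of the superpotential is \<open>J(a,a) F(a)\<^sup>2\<close>.\<close>

lemma indecomposable_unbar_in_W_iff:
  assumes a: "a \<in> C" and ind: "indecomposable a"
  shows "unbar a \<in> W \<longleftrightarrow> Jform d a a \<noteq> 0"
proof -
  have "{p\<in>C \<times> C. fst p + snd p = 2 *\<^sub>R a} = {(a, a)}"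
    using a ind unfolding indecomposable_def by (auto simp: scaleR_2)
  then have "coeff (2 *\<^sub>R a) = Jform d a a * F a * F a" unfolding coeff_def by simp
  moreover have "(\<exists>w\<in>W. 2 *\<^sub>R a = d + w) \<longleftrightarrow> unbar a \<in> W"
  proof
    assume "\<exists>w\<in>W. 2 *\<^sub>R a = d + w"
    then show "unbar a \<in> W" unfolding unbar_def by auto
  next
    assume "unbar a \<in> W"
    then show "\<exists>w\<in>W. 2 *\<^sub>R a = d + w" by (intro bexI[of _ "unbar a"]) (simp_all add: unbar_def)
  qed
  ultimately have "Jform d a a * F a * F a = (if unbar a \<in> W then A (unbar a) else 0)"
    using coeff_eq unfolding unbar_def by simp
  then show ?thesis using F_nonzero[OF a] A_nonzero by (auto split: if_splits)
qed

lemma unique_pair_in_W: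
  assumes a: "a \<in> C" and b: "b \<in> C" and ab: "a \<noteq> b"
    and unique: "\<And>p q. p \<in> C \<Longrightarrow> q \<in> C \<Longrightarrow> p + q = a + b \<Longrightarrow> (p = a \<and> q = b) \<or> (p = b \<and> q = a)"
    and J: "Jform d a b \<noteq> 0"
  shows "a + b - d \<in> W"
proof -
  have "{p\<in>C \<times> C. fst p + snd p = a + b} = {(a, b), (b, a)}"
  proof (rule set_eqI, rule iffI)
    fix x assume "x \<in> {p\<in>C \<times> C. fst p + snd p = a + b}"
    then show "x \<in> {(a, b), (b, a)}" using unique[of "fst x" "snd x"] by (cases x) auto
  next
    fix x assume "x \<in> {(a, b), (b, a)}"
    then show "x \<in> {p\<in>C \<times> C. fst p + snd p = a + b}" using a b by (auto simp: add.commute)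
  qed
  then have "coeff (a + b) = 2 * (Jform d a b * F a * F b)"
    using ab unfolding coeff_def by (simp add: Jform_sym mult.commute mult.left_commute)
  also have "\<dots> \<noteq> 0" using J F_nonzero[OF a] F_nonzero[OF b] by simp
  finally show ?thesis using coeff_eq by (auto split: if_splits)
qed

lemma extreme_point_indecomposable:
  assumes "a extreme_point_of (convex hull C)" shows "indecomposable a"
  unfolding indecomposable_def
proof (intro ballI impI)
  fix p q assume pq: "p \<in> C" "q \<in> C" "p + q = 2 *\<^sub>R a"
  then have m: "midpoint p q = a" by (simp add: midpoint_def)
  have "p = q"
  proof (rule ccontr)
    assume "p \<noteq> q"
    then have "a \<in> open_segment p q" using m midpoint_in_open_segment by metis
    then show False using assms pq(1,2) hull_inc[of _ C] unfolding extreme_point_of_def by blast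
  qed
  then show "p = a \<and> q = a" using m by simp
qed

lemma extreme_point_not_midpoint_of_W:
  assumes a: "a extreme_point_of (convex hull C)" and w: "w1 \<in> W" "w2 \<in> W"
    and m: "2 *\<^sub>R unbar a = w1 + w2"
  shows "w1 = w2"
proof (rule ccontr)
  assume "w1 \<noteq> w2"
  then have "bar d w1 \<noteq> bar d w2" by (metis unbar_bar)
  moreover have "midpoint (bar d w1) (bar d w2) = a"
    unfolding vec_eq_iff
  proof
    fix k
    have "2 * (2 * a $ k - d $ k) = w1 $ k + w2 $ k"
      using arg_cong[OF m, of "\<lambda>v. v $ k"] by (simp add: unbar_def)
    then show "midpoint (bar d w1) (bar d w2) $ k = a $ k"
      by (simp add: midpoint_def bar_def field_simps)
  qed
  ultimately have "a \<in> open_segment (bar d w1) (bar d w2)"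
    using midpoint_in_open_segment by metis
  then show False using a bar_W_in_hull[OF w(1)] bar_W_in_hull[OF w(2)]
    unfolding extreme_point_of_def by blast
qed

definition midpoint_closed :: "(real^'r) set \<Rightarrow> bool" where
  "midpoint_closed G \<longleftrightarrow> G \<subseteq> C \<and> (\<forall>p\<in>C. \<forall>q\<in>C. \<forall>a\<in>G. p + q = 2 *\<^sub>R a \<longrightarrow> p \<in> G \<and> q \<in> G)"

text \<open>A point of maximal norm cannot be the midpoint of two distinct points of norm at most its own.\<close>

lemma midpoint_closed_has_indecomposable:
  assumes G: "midpoint_closed G" "G \<noteq> {}"
  obtains a where "a \<in> G" "indecomposable a"
proof -
  have fG: "finite G" using G finite_C finite_subset unfolding midpoint_closed_def by blast
  have "Max (norm ` G) \<in> norm ` G" using fG G(2) by (intro Max_in) auto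
  then obtain a where a: "a \<in> G" "norm a = Max (norm ` G)" by auto
  then have a_max: "norm b \<le> norm a" if "b \<in> G" for b using fG that by simp
  have "indecomposable a"
    unfolding indecomposable_def
  proof (intro ballI impI)
    fix p q assume pq: "p \<in> C" "q \<in> C" "p + q = 2 *\<^sub>R a"
    then have "p \<in> G" "q \<in> G" using G a(1) unfolding midpoint_closed_def by blast+
    then have "(norm p)\<^sup>2 \<le> (norm a)\<^sup>2" "(norm q)\<^sup>2 \<le> (norm a)\<^sup>2"
      using a_max by (auto intro: power_mono)
    moreover have "(norm (p + q))\<^sup>2 + (norm (p - q))\<^sup>2 = 2 * (norm p)\<^sup>2 + 2 * (norm q)\<^sup>2"
      by (simp add: power2_norm_eq_inner inner_add inner_diff algebra_simps)
    moreover have "(norm (p + q))\<^sup>2 = 4 * (norm a)\<^sup>2"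
      unfolding pq(3) by (simp add: power2_eq_square)
    ultimately have "(norm (p - q))\<^sup>2 \<le> 0" by linarith
    then have "p = q" by simp
    then show "p = a \<and> q = a" using pq(3) by (simp add: scaleR_2[symmetric])
  qed
  with a(1) show thesis by (rule that)
qed

lemma midpoint_closed_min_entry:
  assumes G: "midpoint_closed G" and p: "p \<in> G"
  obtains a where "a \<in> G" "indecomposable a" "unbar a $ l \<le> unbar p $ l"
proof -
  have fG: "finite G" using G finite_C finite_subset unfolding midpoint_closed_def by blast
  define m where "m = Min ((\<lambda>b. unbar b $ l) ` G)"
  have m_le: "m \<le> unbar b $ l" if "b \<in> G" for b unfolding m_def using fG that by simp
  define G' where "G' = {b\<in>G. unbar b $ l = m}"
  have "m \<in> (\<lambda>b. unbar b $ l) ` G" unfolding m_def using fG p by (intro Min_in) auto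
  then have "G' \<noteq> {}" unfolding G'_def by auto
  moreover have "midpoint_closed G'"
    unfolding midpoint_closed_def
  proof (intro conjI ballI impI)
    show "G' \<subseteq> C" using G unfolding G'_def midpoint_closed_def by auto
  next
    fix p q a assume pq: "p \<in> C" "q \<in> C" "a \<in> G'" "p + q = 2 *\<^sub>R a"
    then have "p \<in> G" "q \<in> G" using G unfolding G'_def midpoint_closed_def by blast+
    moreover have "unbar p $ l + unbar q $ l = 2 * m"
      using arg_cong[OF unbar_midpoint[OF pq(4)], of "\<lambda>v. v $ l"] pq(3) unfolding G'_def by simp
    ultimately show "p \<in> G'" "q \<in> G'" using m_le[of p] m_le[of q] unfolding G'_def by fastforce+
  qed
  ultimately obtain a where "a \<in> G'" "indecomposable a"
    using midpoint_closed_has_indecomposable by blast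
  then show thesis using that m_le[OF p] unfolding G'_def by auto
qed

lemma indecomposable_large_entry_in_W:
  assumes a: "a \<in> C" "indecomposable a" and large: "d $ j < (unbar a $ j)\<^sup>2"
  shows "unbar a \<in> W"
proof -
  have "1 < (unbar a $ j)\<^sup>2 / d $ j" using large d_pos[of j] by (simp add: less_divide_eq)
  then have "(1 - (unbar a $ j)\<^sup>2 / d $ j) / 4 < 0" by simp
  then have "Jform d a a < 0" using Jform_diag_le[OF a(1), of j] by linarith
  then show ?thesis using indecomposable_unbar_in_W_iff[OF a] by simp
qed

lemma unbar_entry_ge_neg2:
  assumes dj: "d $ j \<le> 4" and p: "p \<in> C"
  shows "-2 \<le> unbar p $ j"
proof (rule ccontr)
  assume "\<not> -2 \<le> unbar p $ j"
  moreover have "midpoint_closed C" unfolding midpoint_closed_def by blast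
  then obtain a where a: "a \<in> C" "indecomposable a" and "unbar a $ j \<le> unbar p $ j"
    using midpoint_closed_min_entry[OF _ p] by blast
  ultimately have "2\<^sup>2 < (- unbar a $ j)\<^sup>2" by (intro power_strict_mono) auto
  then have "4 < (unbar a $ j)\<^sup>2" by simp
  then have "unbar a \<in> W" using dj by (intro indecomposable_large_entry_in_W[OF a, of j]) linarith
  then show False
    using admissible_entries[OF admissible_W, of "unbar a" j] \<open>\<not> -2 \<le> unbar p $ j\<close>
      \<open>unbar a $ j \<le> unbar p $ j\<close> by auto
qed

lemma neg2_sum_entries:
  assumes dj: "d $ j \<le> 4" and pq: "p \<in> C" "q \<in> C" "unbar p $ j + unbar q $ j = -4"
  shows "unbar p $ j = -2" "unbar q $ j = -2"
  using unbar_entry_ge_neg2[OF dj pq(1)] unbar_entry_ge_neg2[OF dj pq(2)] pq(3) by linarith+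

lemma neg2_slice_midpoint_closed:
  assumes dj: "d $ j \<le> 4"
  shows "midpoint_closed {a\<in>C. unbar a $ j = -2}"
  unfolding midpoint_closed_def
proof (intro conjI ballI impI)
  fix p q a assume pq: "p \<in> C" "q \<in> C" "a \<in> {a\<in>C. unbar a $ j = -2}" "p + q = 2 *\<^sub>R a"
  then have "unbar p $ j + unbar q $ j = -4"
    using arg_cong[OF unbar_midpoint[OF pq(4)], of "\<lambda>v. v $ j"] by simp
  then show "p \<in> {a\<in>C. unbar a $ j = -2}" "q \<in> {a\<in>C. unbar a $ j = -2}"
    using neg2_sum_entries[OF dj pq(1,2)] pq(1,2) by auto
qed auto

lemma unbar_nonneg_off_neg2:
  assumes dj: "d $ j < 4" and p: "p \<in> C" "unbar p $ j = -2" and l: "l \<noteq> j"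
  shows "0 \<le> unbar p $ l"
proof (rule ccontr)
  assume "\<not> 0 \<le> unbar p $ l"
  moreover have "midpoint_closed {a\<in>C. unbar a $ j = -2}"
    using neg2_slice_midpoint_closed dj by simp
  moreover have "p \<in> {a\<in>C. unbar a $ j = -2}" using p by simp
  ultimately obtain a where a: "a \<in> C" "indecomposable a" "unbar a $ j = -2" "unbar a $ l < 0"
    using midpoint_closed_min_entry[where l = l] by (smt (verit) mem_Collect_eq)
  have "unbar a \<in> W" by (intro indecomposable_large_entry_in_W[OF a(1,2), of j]) (use a(3) dj in simp)
  then show False using admissible_entry_off_neg2[OF admissible_W a(3) l] a(4) by auto
qed

lemma unbar_entries_off_neg2:
  assumes dj: "d $ j < 4" and p: "p \<in> C" "unbar p $ j = -2" and ij: "i \<noteq> j"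
  shows "unbar p $ i \<le> 1" and "unbar p $ i = 1 \<Longrightarrow> typeIII_at i j (unbar p)"
proof -
  define R where "R = sum (\<lambda>l. unbar p $ l) (UNIV - {i, j})"
  have nonneg: "0 \<le> unbar p $ l" if "l \<in> UNIV - {i, j}" for l
    using unbar_nonneg_off_neg2[OF dj p] that by simp
  have "unbar p $ i + unbar p $ j + R = -1"
    using vsum_unbar[OF p(1)] sum_UNIV_split2[OF ij, of "\<lambda>l. unbar p $ l"] unfolding R_def vsum_def by simp
  then have iR: "unbar p $ i + R = 1" using p(2) by simp
  moreover have "0 \<le> R" unfolding R_def using nonneg by (intro sum_nonneg) auto
  ultimately show "unbar p $ i \<le> 1" by linarith
  assume "unbar p $ i = 1"
  then have "R = 0" using iR by simp
  have "unbar p $ l = 0" if "l \<noteq> i" "l \<noteq> j" for l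
    by (rule sum_nonneg_0[where s = "UNIV - {i, j}"]) (use nonneg that \<open>R = 0\<close> in \<open>auto simp: R_def\<close>)
  then show "typeIII_at i j (unbar p)" using ij p(2) \<open>unbar p $ i = 1\<close> unfolding typeIII_at_def by blast
qed

lemma typeIII_unbar_realized:
  assumes dj: "d $ j < 4" and v: "v \<in> W" "typeIII_at k j v"
  obtains p where "p \<in> C" "unbar p = v"
proof -
  obtain p q where pq: "p \<in> C" "q \<in> C" "p + q = d + v" using W_decomposes[OF v(1)] .
  have sum: "unbar p + unbar q = 2 *\<^sub>R v" using pq(3) by (simp add: unbar_add)
  have kj: "k \<noteq> j" using v(2) unfolding typeIII_at_def by simp
  have "unbar p $ j + unbar q $ j = -4"
    using arg_cong[OF sum, of "\<lambda>x. x $ j"] typeIII_at_nth[OF v(2), of j] kj by simp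
  moreover have "d $ j \<le> 4" using dj by simp
  ultimately have j2: "unbar p $ j = -2" "unbar q $ j = -2"
    using neg2_sum_entries[OF _ pq(1,2)] by blast+
  have "unbar p $ k + unbar q $ k = 2"
    using arg_cong[OF sum, of "\<lambda>x. x $ k"] typeIII_at_nth[OF v(2), of k] by simp
  then have "unbar p $ k = 1"
    using unbar_entries_off_neg2(1)[OF dj pq(1) j2(1) kj] unbar_entries_off_neg2(1)[OF dj pq(2) j2(2) kj]
    by linarith
  then have "typeIII_at k j (unbar p)" using unbar_entries_off_neg2(2)[OF dj pq(1) j2(1) kj] by blast
  then show thesis using that pq(1) typeIII_at_eq v(2) by blast
qed

lemma typeIII_sum_unique_decomposition:
  assumes dj: "d $ j < 4" and p: "p \<in> C" "typeIII_at i j (unbar p)"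
    and q: "q \<in> C" "unbar q $ j = -2"
    and q_max: "\<And>a. a \<in> C \<Longrightarrow> unbar a $ j = -2 \<Longrightarrow> unbar a $ i < 1 \<Longrightarrow> unbar a $ i \<le> unbar q $ i"
    and p12: "p1 \<in> C" "p2 \<in> C" "p1 + p2 = p + q"
  shows "(p1 = p \<and> p2 = q) \<or> (p1 = q \<and> p2 = p)"
proof -
  have ij: "i \<noteq> j" using p(2) unfolding typeIII_at_def by simp
  have sum: "unbar p1 + unbar p2 = unbar p + unbar q" using p12(3) by (simp add: unbar_add)
  have "unbar p1 $ j + unbar p2 $ j = -4"
    using arg_cong[OF sum, of "\<lambda>x. x $ j"] typeIII_at_nth[OF p(2), of j] q(2) ij by simp
  then have j2: "unbar p1 $ j = -2" "unbar p2 $ j = -2"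
    using neg2_sum_entries[OF _ p12(1,2)] dj by force+
  have i_sum: "unbar p1 $ i + unbar p2 $ i = 1 + unbar q $ i"
    using arg_cong[OF sum, of "\<lambda>x. x $ i"] typeIII_at_nth[OF p(2), of i] by simp
  have is_p: "x = p" if "x \<in> C" "unbar x $ j = -2" "unbar x $ i = 1" for x
    using unbar_entries_off_neg2(2)[OF dj that(1,2) ij] that(3) typeIII_at_eq[OF _ p(2)] unbar_inj
    by blast
  show ?thesis
  proof (cases "unbar p1 $ i = 1")
    case True
    then have "p1 = p" using is_p p12(1) j2(1) by blast
    then show ?thesis using p12(3) by simp
  next
    case False
    then have "unbar p1 $ i < 1" using unbar_entries_off_neg2(1)[OF dj p12(1) j2(1) ij] by simp
    then have "unbar p1 $ i \<le> unbar q $ i" using q_max p12(1) j2(1) by blast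
    then have "unbar p2 $ i = 1"
      using i_sum unbar_entries_off_neg2(1)[OF dj p12(2) j2(2) ij] by linarith
    then have "p2 = p" using is_p p12(2) j2(2) by blast
    then show ?thesis using p12(3) by (simp add: add.commute)
  qed
qed

lemma no_two_typeIII_sharing_neg2:
  assumes dj: "d $ j \<le> 3" and w: "w \<in> W" "typeIII_at i j w" and w': "w' \<in> W" "typeIII_at i' j w'"
    and ii': "i \<noteq> i'"
  shows False
proof -
  have dj4: "d $ j < 4" using dj by simp
  have ij: "i \<noteq> j" using w(2) unfolding typeIII_at_def by simp
  obtain p where p: "p \<in> C" "unbar p = w" using typeIII_unbar_realized[OF dj4 w] .
  obtain p' where p': "p' \<in> C" "unbar p' = w'" using typeIII_unbar_realized[OF dj4 w'] .
  define E where "E = {a\<in>C. unbar a $ j = -2 \<and> unbar a $ i < 1}"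
  have "i' \<noteq> j" using w'(2) unfolding typeIII_at_def by simp
  then have "unbar p' $ j = -2" "unbar p' $ i = 0"
    using p'(2) typeIII_at_nth[OF w'(2), of j] typeIII_at_nth[OF w'(2), of i] ij ii' by simp_all
  then have "p' \<in> E" unfolding E_def using p'(1) by simp
  moreover have "finite E" unfolding E_def using finite_C by simp
  ultimately have "Max ((\<lambda>a. unbar a $ i) ` E) \<in> (\<lambda>a. unbar a $ i) ` E" by (intro Max_in) auto
  then obtain q where q: "q \<in> E" "unbar q $ i = Max ((\<lambda>a. unbar a $ i) ` E)" by auto
  have q_max: "unbar a $ i \<le> unbar q $ i" if "a \<in> E" for a
    using \<open>finite E\<close> that q(2) by simp
  have qC: "q \<in> C" "unbar q $ j = -2" "unbar q $ i < 1" using q(1) unfolding E_def by auto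
  have "0 \<le> unbar q $ i" using unbar_nonneg_off_neg2[OF dj4 qC(1,2) ij] .
  have "p \<noteq> q" using p(2) qC(3) typeIII_at_nth[OF w(2), of i] by auto
  moreover have "(p1 = p \<and> p2 = q) \<or> (p1 = q \<and> p2 = p)" if "p1 \<in> C" "p2 \<in> C" "p1 + p2 = p + q" for p1 p2
    using typeIII_sum_unique_decomposition[OF dj4 p(1) _ qC(1,2) _ that] p(2) w(2) q_max
    unfolding E_def by blast
  moreover have "Jform d p q < 0"
  proof -
    have "(\<Sum>l\<in>UNIV. unbar p $ l * unbar q $ l / d $ l) = unbar q $ i / d $ i + 4 / d $ j"
      using ij qC(2) by (subst sum_UNIV_supported[of "{i, j}"]) (auto simp: p(2) typeIII_at_nth[OF w(2)])
    moreover have "1 < 4 / d $ j" using dj d_pos[of j] by (simp add: less_divide_eq)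
    moreover have "0 \<le> unbar q $ i / d $ i" using \<open>0 \<le> unbar q $ i\<close> d_pos[of i] by simp
    ultimately have "1 < (\<Sum>l\<in>UNIV. unbar p $ l * unbar q $ l / d $ l)" by linarith
    then show ?thesis using Jform_C[OF p(1) qC(1)] by simp
  qed
  ultimately have vW: "p + q - d \<in> W" using unique_pair_in_W[OF p(1) qC(1)] by simp
  have e: "2 *\<^sub>R (p + q - d) = w + unbar q" using unbar_add[of p q] p(2) by simp
  have "2 * (p + q - d) $ j = -4" "2 * (p + q - d) $ i = 1 + unbar q $ i"
    using arg_cong[OF e, of "\<lambda>x. x $ j"] arg_cong[OF e, of "\<lambda>x. x $ i"] qC(2)
      typeIII_at_nth[OF w(2), of i] typeIII_at_nth[OF w(2), of j] ij by simp_all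
  then have "(p + q - d) $ j = -2" "(p + q - d) $ i = (1 + unbar q $ i) / 2" by simp_all
  then show False
    using admissible_entry_off_neg2[OF admissible_W[OF vW] _ ij] \<open>0 \<le> unbar q $ i\<close> qC(3) by auto
qed

lemma Jform_bar_W_C:
  assumes "w \<in> W" "p \<in> C"
  shows "Jform d (bar d w) p = (1 - (\<Sum>l\<in>UNIV. w $ l * unbar p $ l / d $ l)) / 4"
  using Jform_bar[OF d_pos ndim_ne_1 vsum_admissible[OF admissible_W[OF assms(1)]] vsum_unbar[OF assms(2)]]
  by simp

lemma null_vertex_unbar_notin_W:
  assumes "cb extreme_point_of (convex hull C)" "Jform d cb cb = 0"
  shows "unbar cb \<notin> W"
  using indecomposable_unbar_in_W_iff[OF extreme_point_of_convex_hull[OF assms(1)]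
      extreme_point_indecomposable[OF assms(1)]] assms(2) by simp

lemma null_pairings:
  assumes cb: "cb \<in> C" "Jform d cb cb = 0" and w: "w \<in> W" "Jform d (bar d w) cb = 0"
  shows "(\<Sum>l\<in>UNIV. unbar cb $ l * unbar cb $ l / d $ l) = 1"
    and "(\<Sum>l\<in>UNIV. w $ l * unbar cb $ l / d $ l) = 1"
  using Jform_C[OF cb(1) cb(1)] cb(2) Jform_bar_W_C[OF w(1) cb(1)] w(2) by simp_all

lemma null_vertex_entry_between_neg2_and_1:
  assumes cb: "cb extreme_point_of (convex hull C)" "Jform d cb cb = 0"
    and u: "u \<in> W" "Jform d (bar d u) cb = 0"
  shows "\<exists>i. unbar cb $ i \<noteq> 0 \<and> -2 < unbar cb $ i \<and> unbar cb $ i < 1"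
proof -
  have cbC: "cb \<in> C" using cb(1) extreme_point_of_convex_hull by blast
  show ?thesis
  proof (rule exists_entry_between_neg2_and_1[OF d_pos vsum_unbar[OF cbC] _ admissible_W[OF u(1)]])
    show "(\<Sum>l\<in>UNIV. unbar cb $ l * (unbar cb $ l - u $ l) / d $ l) = 0"
      using null_pairings[OF cbC cb(2) u] sum_pairing_diff[of "unbar cb" u d] by simp
    show "unbar cb \<noteq> u" using null_vertex_unbar_notin_W[OF cb] u(1) by blast
  qed
qed

lemma null_vertex_pairing_unique:
  assumes cb: "cb extreme_point_of (convex hull C)" "Jform d cb cb = 0"
    and notI: "\<not> typeI (unbar cb)" and int: "int_vec (unbar cb)"
    and w1: "w1 \<in> W" "Jform d (bar d w1) cb = 0" and w2: "w2 \<in> W" "Jform d (bar d w2) cb = 0"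
  shows "w1 = w2"
proof -
  have cbC: "cb \<in> C" using cb(1) extreme_point_of_convex_hull by blast
  have neg2: "\<exists>i j. typeIII_at i j w \<and> unbar cb $ j = -1" if w: "w \<in> W" "Jform d (bar d w) cb = 0" for w
  proof -
    have "(\<Sum>l\<in>UNIV. unbar cb $ l * (unbar cb $ l - w $ l) / d $ l) = 0"
      using null_pairings[OF cbC cb(2) w] sum_pairing_diff[of "unbar cb" w d] by simp
    moreover have "unbar cb \<noteq> w" using null_vertex_unbar_notin_W[OF cb] w(1) by blast
    ultimately obtain j where "w $ j = -2" "unbar cb $ j = -1"
      using integral_zero_pairing_neg2[OF d_pos int vsum_unbar[OF cbC] _ admissible_W[OF w(1)] _ notI]
      by blast
    then show ?thesis using admissible_neg2_typeIII_at[OF admissible_W[OF w(1)]] by metis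
  qed
  obtain i1 j1 i2 j2 where t1: "typeIII_at i1 j1 w1" "unbar cb $ j1 = -1"
    and t2: "typeIII_at i2 j2 w2" "unbar cb $ j2 = -1"
    using neg2[OF w1] neg2[OF w2] by blast
  note sums = null_pairings(1)[OF cbC cb(2) w1] null_pairings(2)[OF cbC cb(2) w1]
    null_pairings(2)[OF cbC cb(2) w2]
  consider "j1 = j2" "i1 = i2" | "j1 = j2" "i1 \<noteq> i2" | "j1 \<noteq> j2" by blast
  then show ?thesis
  proof cases
    case 1
    then show ?thesis using typeIII_at_eq t1(1) t2(1) by blast
  next
    case 2
    then have "d $ j1 \<le> 3"
      using typeIII_pairings_same_neg2[OF d_pos d_nat int sums t1(1) _ _ t1(2)] t2(1) by blast
    then show ?thesis using no_two_typeIII_sharing_neg2 w1(1) w2(1) t1(1) t2(1) 2 by blast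
  next
    case 3
    then have "2 *\<^sub>R unbar cb = w1 + w2"
      using typeIII_pairings_distinct_neg2[OF d_pos int vsum_unbar[OF cbC] sums t1(1) t2(1) _ t1(2) t2(2)]
      by blast
    then show ?thesis using extreme_point_not_midpoint_of_W[OF cb(1) w1(1) w2(1)] by blast
  qed
qed

end

section \<open>Central projection\<close>

text \<open>The central projection maps the chord from \<open>z1\<close> to \<open>z2\<close> onto the chord between their images,
  reweighting by the distances \<open>a \<bullet> z - a \<bullet> cb\<close> to the hyperplane through \<open>cb\<close>.\<close>

lemma cproj_two_point_combination:
  fixes cb a z1 z2 :: "real^'r"
  assumes a1p: "0 < a \<bullet> z1 - a \<bullet> cb" and a2p: "0 < a \<bullet> z2 - a \<bullet> cb"
    and uv: "0 \<le> u" "0 \<le> v" "u + v = 1"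
  obtains s t where "0 \<le> s" "0 \<le> t" "s + t = 1"
    "cproj cb a \<beta> (s *\<^sub>R z1 + t *\<^sub>R z2) = u *\<^sub>R cproj cb a \<beta> z1 + v *\<^sub>R cproj cb a \<beta> z2"
proof -
  define g where "g = \<beta> - a \<bullet> cb"
  define a1 where "a1 = a \<bullet> z1 - a \<bullet> cb"
  define a2 where "a2 = a \<bullet> z2 - a \<bullet> cb"
  define K where "K = u / a1 + v / a2"
  have a12: "0 < a1" "0 < a2" using a1p a2p unfolding a1_def a2_def by auto
  have k12: "0 \<le> u / a1" "0 \<le> v / a2" using uv a12 by auto
  have "0 < u \<or> 0 < v" using uv by linarith
  then have Kp: "0 < K" using a12 k12 unfolding K_def by (auto intro: add_pos_nonneg add_nonneg_pos)
  define s where "s = u / a1 / K"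
  define t where "t = v / a2 / K"
  have "s + t = K / K" unfolding s_def t_def K_def by (rule add_divide_distrib[symmetric])
  then have st: "0 \<le> s" "0 \<le> t" "s + t = 1"
    using Kp divide_nonneg_pos[OF k12(1) Kp] divide_nonneg_pos[OF k12(2) Kp] unfolding s_def t_def
    by simp_all
  define z where "z = s *\<^sub>R z1 + t *\<^sub>R z2"
  have "a \<bullet> z - a \<bullet> cb = s * a1 + t * a2"
    using st(3) unfolding z_def a1_def a2_def by (simp add: inner_add_right algebra_simps)
       (metis add_diff_cancel_left' distrib_right mult_1)
  also have "\<dots> = (u + v) / K" using a12 unfolding s_def t_def by (simp add: add_divide_distrib)
  also have "\<dots> = 1 / K" using uv(3) by simp
  finally have c0: "cproj cb a \<beta> z = cb + (g * K) *\<^sub>R (z - cb)" by (simp add: cproj_def g_def)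
  have real: "c + g * K * (s * x1 + t * x2 - c) = u * (c + g / a1 * (x1 - c)) + v * (c + g / a2 * (x2 - c))"
    for c x1 x2
  proof -
    have "g * K * (s * x1 + t * x2 - c) = g * (u / a1 * x1 + v / a2 * x2 - K * c)"
      using Kp st(3) unfolding s_def t_def by (simp add: field_simps)
    also have "\<dots> = u * (g / a1 * (x1 - c)) + v * (g / a2 * (x2 - c))"
      using a12 unfolding K_def by (simp add: field_simps)
    finally show ?thesis using uv(3) by (simp add: algebra_simps) (metis add.commute distrib_left mult.right_neutral)
  qed
  have "cb + (g * K) *\<^sub>R (z - cb)
      = u *\<^sub>R (cb + (g / a1) *\<^sub>R (z1 - cb)) + v *\<^sub>R (cb + (g / a2) *\<^sub>R (z2 - cb))"
    unfolding vec_eq_iff z_def using real by simp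
  then have "cproj cb a \<beta> z = u *\<^sub>R cproj cb a \<beta> z1 + v *\<^sub>R cproj cb a \<beta> z2"
    unfolding c0 by (simp add: cproj_def g_def a1_def a2_def)
  with st show thesis using that unfolding z_def by blast
qed

lemma convex_cproj_image:
  fixes cb a :: "real^'r" and S :: "(real^'r) set"
  assumes sep: "a \<bullet> cb < \<beta>" "\<forall>z\<in>convex hull S. \<beta> < a \<bullet> z"
  shows "convex (cproj cb a \<beta> ` (convex hull S))"
proof (rule convexI)
  fix u v :: real and Y1 Y2
  assume Y: "Y1 \<in> cproj cb a \<beta> ` (convex hull S)" "Y2 \<in> cproj cb a \<beta> ` (convex hull S)"
    and uv: "0 \<le> u" "0 \<le> v" "u + v = 1"
  then obtain z1 z2 where z: "z1 \<in> convex hull S" "z2 \<in> convex hull S"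
    "Y1 = cproj cb a \<beta> z1" "Y2 = cproj cb a \<beta> z2" by blast
  have "0 < a \<bullet> z1 - a \<bullet> cb" "0 < a \<bullet> z2 - a \<bullet> cb" using sep z(1,2) by force+
  then obtain s t where st: "0 \<le> s" "0 \<le> t" "s + t = 1"
    "cproj cb a \<beta> (s *\<^sub>R z1 + t *\<^sub>R z2) = u *\<^sub>R Y1 + v *\<^sub>R Y2"
    using cproj_two_point_combination[OF _ _ uv] z(3,4) by metis
  moreover have "s *\<^sub>R z1 + t *\<^sub>R z2 \<in> convex hull S"
    using convexD[OF convex_convex_hull z(1,2) st(1-3)] .
  ultimately show "u *\<^sub>R Y1 + v *\<^sub>R Y2 \<in> cproj cb a \<beta> ` (convex hull S)" by (metis image_eqI)
qed

lemma cproj_in_convex_hull_image: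
  fixes cb a :: "real^'r" and S :: "(real^'r) set"
  assumes fin: "finite S" and sep: "a \<bullet> cb < \<beta>" "\<forall>z\<in>convex hull S. \<beta> < a \<bullet> z"
    and z: "z \<in> convex hull S"
  shows "cproj cb a \<beta> z \<in> convex hull (cproj cb a \<beta> ` S)"
proof -
  obtain l where l: "\<forall>x\<in>S. 0 \<le> l x" "sum l S = 1" "(\<Sum>x\<in>S. l x *\<^sub>R x) = z"
    using z convex_hull_finite[OF fin] by auto
  define g where "g = \<beta> - a \<bullet> cb"
  define al where "al x = a \<bullet> x - a \<bullet> cb" for x
  have alp: "al x > 0" if "x \<in> convex hull S" for x using sep that unfolding al_def by force
  have alS: "al x > 0" if "x \<in> S" for x by (rule alp[OF hull_inc[OF that]])
  have alz: "al z = (\<Sum>x\<in>S. l x * al x)"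
  proof -
    have "a \<bullet> z = (\<Sum>x\<in>S. l x * (a \<bullet> x))" unfolding l(3)[symmetric] by (simp add: inner_sum_right)
    moreover have "(\<Sum>x\<in>S. l x * (a \<bullet> cb)) = sum l S * (a \<bullet> cb)" by (rule sum_distrib_right[symmetric])
    then have "a \<bullet> cb = (\<Sum>x\<in>S. l x * (a \<bullet> cb))" using l(2) by simp
    ultimately show ?thesis unfolding al_def by (simp add: right_diff_distrib sum_subtractf)
  qed
  have alzp: "al z > 0" by (rule alp[OF z])
  define m where "m x = l x * al x / al z" for x
  have m0: "\<forall>x\<in>S. 0 \<le> m x" using l(1) alS alzp unfolding m_def by (simp add: less_imp_le)
  have "sum m S = (\<Sum>x\<in>S. l x * al x) / al z" unfolding m_def by (rule sum_divide_distrib[symmetric])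
  then have m1: "sum m S = 1" using alzp alz by simp
  have cp: "cproj cb a \<beta> x = cb + (g / al x) *\<^sub>R (x - cb)" for x by (simp add: cproj_def g_def al_def)
  have "(\<Sum>x\<in>S. m x *\<^sub>R cproj cb a \<beta> x) = (\<Sum>x\<in>S. m x *\<^sub>R cb + (l x * g / al z) *\<^sub>R (x - cb))"
  proof (rule sum.cong[OF refl])
    fix x assume "x \<in> S"
    then have "al x \<noteq> 0" using alS[of x] by linarith
    then show "m x *\<^sub>R cproj cb a \<beta> x = m x *\<^sub>R cb + (l x * g / al z) *\<^sub>R (x - cb)"
      unfolding cp m_def by (simp add: scaleR_add_right)
  qed
  also have "\<dots> = (\<Sum>x\<in>S. m x *\<^sub>R cb) + (\<Sum>x\<in>S. (g / al z) *\<^sub>R (l x *\<^sub>R (x - cb)))"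
    by (simp add: sum.distrib mult.commute)
  also have "\<dots> = (sum m S) *\<^sub>R cb + (g / al z) *\<^sub>R (\<Sum>x\<in>S. l x *\<^sub>R (x - cb))"
    by (simp only: scaleR_sum_left scaleR_sum_right)
  also have "(\<Sum>x\<in>S. l x *\<^sub>R (x - cb)) = z - cb"
  proof -
    have "(\<Sum>x\<in>S. l x *\<^sub>R (x - cb)) = (\<Sum>x\<in>S. l x *\<^sub>R x) - (\<Sum>x\<in>S. l x *\<^sub>R cb)"
      by (simp add: scaleR_diff_right sum_subtractf)
    also have "(\<Sum>x\<in>S. l x *\<^sub>R cb) = (sum l S) *\<^sub>R cb" by (simp only: scaleR_sum_left)
    finally show ?thesis using l(2,3) by simp
  qed
  finally have e: "(\<Sum>x\<in>S. m x *\<^sub>R cproj cb a \<beta> x) = cproj cb a \<beta> z" using m1 cp[of z] by simp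
  have "(\<Sum>x\<in>S. m x *\<^sub>R cproj cb a \<beta> x) \<in> convex hull (cproj cb a \<beta> ` S)"
    by (rule convex_sum[OF fin convex_convex_hull m1]) (use m0 in \<open>auto intro: hull_inc\<close>)
  then show ?thesis using e by simp
qed
lemma null_Jform_cproj:
  assumes "Jform d cb cb = 0"
  shows "Jform d cb (cproj cb a \<beta> z) = (\<beta> - a \<bullet> cb) / (a \<bullet> z - a \<bullet> cb) * Jform d cb z"
  using Jform_affine_right[of d cb cb "(\<beta> - a \<bullet> cb) / (a \<bullet> z - a \<bullet> cb)" z] assms
  unfolding cproj_def by simp

lemma extreme_point_Delta_null:
  fixes d cb a :: "real^'r"
  assumes fW: "finite W" and sh: "sep_hyperplane d W cb a \<beta>" and null: "Jform d cb cb = 0"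
    and ex: "\<xi> extreme_point_of (Delta d W cb a \<beta>)" and J\<xi>: "Jform d cb \<xi> = 0"
  obtains w where "w \<in> W" "Jform d (bar d w) cb = 0" "\<xi> = cproj cb a \<beta> (bar d w)"
proof -
  define S where "S = bar d ` W"
  have fS: "finite S" unfolding S_def using fW by simp
  have sep: "a \<bullet> cb < \<beta>" "\<forall>z\<in>convex hull S. \<beta> < a \<bullet> z"
    using sh unfolding sep_hyperplane_def S_def by auto
  have D: "Delta d W cb a \<beta> = cproj cb a \<beta> ` (convex hull S)" unfolding Delta_def S_def ..
  have "\<xi> \<in> Delta d W cb a \<beta>" using ex unfolding extreme_point_of_def by blast
  then obtain z where z: "z \<in> convex hull S" "\<xi> = cproj cb a \<beta> z" unfolding D by blast
  have "\<xi> \<in> convex hull (cproj cb a \<beta> ` S)"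
    using cproj_in_convex_hull_image[OF fS sep z(1)] z(2) by simp
  moreover have "convex hull (cproj cb a \<beta> ` S) \<subseteq> Delta d W cb a \<beta>"
    unfolding D by (rule hull_minimal) (use convex_cproj_image[OF sep] in \<open>auto intro: hull_inc\<close>)
  ultimately have "\<xi> extreme_point_of (convex hull (cproj cb a \<beta> ` S))"
    using ex unfolding extreme_point_of_def by blast
  then have "\<xi> \<in> cproj cb a \<beta> ` S" by (rule extreme_point_of_convex_hull)
  then obtain w where w: "w \<in> W" "\<xi> = cproj cb a \<beta> (bar d w)" unfolding S_def by blast
  have "a \<bullet> cb < \<beta>" "\<beta> < a \<bullet> bar d w"
    using sep hull_inc[of "bar d w" S] w(1) unfolding S_def by auto
  then have "0 < (\<beta> - a \<bullet> cb) / (a \<bullet> bar d w - a \<bullet> cb)" by simp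
  moreover have "(\<beta> - a \<bullet> cb) / (a \<bullet> bar d w - a \<bullet> cb) * Jform d cb (bar d w) = 0"
    using J\<xi> null_Jform_cproj[OF null] w(2) by simp
  ultimately have "Jform d cb (bar d w) = 0" by (metis mult_eq_0_iff order_less_irrefl)
  then have "Jform d (bar d w) cb = 0" using Jform_sym[of d "bar d w" cb] by simp
  then show thesis using that w by blast
qed

theorem lemma4p4:
  fixes d :: "real^'r" and W C :: "(real^'r) set"
    and A F :: "real^'r \<Rightarrow> real" and cb u :: "real^'r"
  assumes data: "scal_data d W A"
    and sp: "superpotential d W A C F"
    and vert: "cb extreme_point_of (convex hull C)"
    and null: "Jform d cb cb = 0"
    and notI: "\<not> typeI (2 *\<^sub>R cb - d)"
    and uW: "u \<in> W"
    and uJ: "Jform d (bar d u) cb = 0"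
  shows "(\<exists>i. (2 *\<^sub>R cb - d) $ i \<noteq> 0 \<and> -2 < (2 *\<^sub>R cb - d) $ i \<and> (2 *\<^sub>R cb - d) $ i < 1)
       \<and> (int_vec (2 *\<^sub>R cb - d) \<longrightarrow>
            card {w\<in>W. Jform d (bar d w) cb = 0} \<le> 1 \<and>
            (\<forall>a \<beta>. sep_hyperplane d W cb a \<beta> \<longrightarrow>
               card {\<xi>. \<xi> extreme_point_of (Delta d W cb a \<beta>) \<and> Jform d cb \<xi> = 0} \<le> 1))"
proof -
  interpret superpotential_setting d W A C F using data sp by unfold_locales
  have c: "2 *\<^sub>R cb - d = unbar cb" by (simp add: unbar_def)
  show ?thesis
    unfolding c
  proof (intro conjI impI allI)
    show "\<exists>i. unbar cb $ i \<noteq> 0 \<and> -2 < unbar cb $ i \<and> unbar cb $ i < 1"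
      by (rule null_vertex_entry_between_neg2_and_1[OF vert null uW uJ])
  next
    assume "int_vec (unbar cb)"
    then have unique: "w1 = w2" if "w1 \<in> {w\<in>W. Jform d (bar d w) cb = 0}"
      "w2 \<in> {w\<in>W. Jform d (bar d w) cb = 0}" for w1 w2
      using null_vertex_pairing_unique[OF vert null notI[unfolded c]] that by blast
    then show "card {w\<in>W. Jform d (bar d w) cb = 0} \<le> 1" by (rule card_le_1_if_all_equal)
    fix a \<beta> assume sh: "sep_hyperplane d W cb a \<beta>"
    show "card {\<xi>. \<xi> extreme_point_of (Delta d W cb a \<beta>) \<and> Jform d cb \<xi> = 0} \<le> 1"
    proof (rule card_le_1_if_all_equal, clarify)
      fix x y assume x: "x extreme_point_of (Delta d W cb a \<beta>)" "Jform d cb x = 0"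
        and y: "y extreme_point_of (Delta d W cb a \<beta>)" "Jform d cb y = 0"
      obtain w1 where "w1 \<in> W" "Jform d (bar d w1) cb = 0" "x = cproj cb a \<beta> (bar d w1)"
        using extreme_point_Delta_null[OF finite_W sh null x] .
      moreover obtain w2 where "w2 \<in> W" "Jform d (bar d w2) cb = 0" "y = cproj cb a \<beta> (bar d w2)"
        using extreme_point_Delta_null[OF finite_W sh null y] .
      ultimately show "x = y" using unique[of w1 w2] by simp
    qed
  qed
qed

end
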